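(* Let $G=G_1*\cdots*G_r$ ($r\ge2$) be a free product of connected, locally finite, simple, quasi-transitive rooted graphs with $|V_i|\ge2$, and let $z_\ast$ be the smallest positive real number with $\sum_{i=1}^r\frac{\mathcal M_i(z_\ast)}{1+\mathcal M_i(z_\ast)}=1$ (so $z_\ast<\min_i R(\mathcal M_i)$). Let $$N(z)=\prod_{i=1}^r(1+\mathcal M_i(z)),\qquad D(z)=\prod_{k=1}^r\bigl(1+\mathcal M_k(z)\bigr)-\sum_{i=1}^r\mathcal M_i(z)\prod_{j\ne i}\bigl(1+\mathcal M_j(z)\bigr).$$ Then $z_\ast$ is a simple zero of $D$, and there exists a function $g$ analytic in a neighbourhood of $z_\ast$ with $g(z_\ast)\ne0$ such that $$\frac{N(z)}{D(z)}=\frac{g(z)}{z-z_\ast}$$ in a punctured neighbourhood of $z_\ast$.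
   Context: Free product of graphs: let $G_1=(V_1,E_1,o_1),\dots,G_r=(V_r,E_r,o_r)$ be rooted graphs with pairwise distinct vertex sets, $\mathcal I=\{1,\dots,r\}$, and $V_i^\times=V_i\setminus\{o_i\}$; set $\tau(x)=i$ for $x\in V_i^\times$. The vertex set $V$ consists of the empty word $o$ together with all finite words $x_1x_2\cdots x_n$ with letters $x_j\in\bigcup_i V_i^\times$ such that $\tau(x_j)\neq\tau(x_{j+1})$; set $\tau(x_1\cdots x_n)=\tau(x_n)$. Each $V_i$ is regarded as a subset of $V$ with $o_i$ identified with $o$, and concatenation $wx$ is defined when the last letter of $w$ and first letter of $x$ have different types (with $wo_i=w$ if $\tau(w)\ne i$). Edges: for $i\in\mathcal I$ and $x,y\in V_i$ with $x\sim y$ in $G_i$, put an edge $wx\sim wy$ for every $w\in V$ with $\tau(w)\neq i$. The free product is $G=(V,E,o)$. A graph is quasi-transitive if its automorphism group has finitely many orbits on vertices. A self-avoiding walk (SAW) of length $n$ from a vertex is a path $[v_0,\dots,v_n]$ of adjacent vertices starting at that vertex with no vertex repeated. $\sigma_n^{(i)}$ is the number of $n$-step SAWs in $G_i$ starting at $o_i$, $\mathcal M_i(z)=\sum_{n\ge1}\sigma^{(i)}_n z^n$, with radius of convergence $R(\mathcal M_i)$. *)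

theory Defs
  imports "HOL-Analysis.Analysis"
begin

definition simple_graph :: "'a set \<Rightarrow> ('a \<Rightarrow> 'a \<Rightarrow> bool) \<Rightarrow> bool" where
  "simple_graph V E \<longleftrightarrow> (\<forall>x y. E x y \<longrightarrow> x \<in> V \<and> y \<in> V) \<and>
     (\<forall>x y. E x y \<longrightarrow> E y x) \<and> (\<forall>x. \<not> E x x)"

definition is_walk :: "'a set \<Rightarrow> ('a \<Rightarrow> 'a \<Rightarrow> bool) \<Rightarrow> 'a list \<Rightarrow> bool" where
  "is_walk V E p \<longleftrightarrow> p \<noteq> [] \<and> set p \<subseteq> V \<and> (\<forall>k. Suc k < length p \<longrightarrow> E (p ! k) (p ! Suc k))"

definition connected_graph :: "'a set \<Rightarrow> ('a \<Rightarrow> 'a \<Rightarrow> bool) \<Rightarrow> bool" where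
  "connected_graph V E \<longleftrightarrow>
     (\<forall>x\<in>V. \<forall>y\<in>V. \<exists>p. is_walk V E p \<and> hd p = x \<and> last p = y)"

definition locally_finite :: "'a set \<Rightarrow> ('a \<Rightarrow> 'a \<Rightarrow> bool) \<Rightarrow> bool" where
  "locally_finite V E \<longleftrightarrow> (\<forall>x\<in>V. finite {y. E x y})"

definition graph_aut :: "'a set \<Rightarrow> ('a \<Rightarrow> 'a \<Rightarrow> bool) \<Rightarrow> ('a \<Rightarrow> 'a) \<Rightarrow> bool" where
  "graph_aut V E f \<longleftrightarrow> bij_betw f V V \<and> (\<forall>x\<in>V. \<forall>y\<in>V. E (f x) (f y) \<longleftrightarrow> E x y)"

definition quasi_transitive :: "'a set \<Rightarrow> ('a \<Rightarrow> 'a \<Rightarrow> bool) \<Rightarrow> bool" where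
  "quasi_transitive V E \<longleftrightarrow>
     finite ((\<lambda>x. {y. \<exists>f. graph_aut V E f \<and> f x = y}) ` V)"

text \<open>Self-avoiding walks of length n (n steps, n+1 vertices) starting at the root rt.\<close>
definition saws :: "'a set \<Rightarrow> ('a \<Rightarrow> 'a \<Rightarrow> bool) \<Rightarrow> 'a \<Rightarrow> nat \<Rightarrow> 'a list set" where
  "saws V E rt n = {p. is_walk V E p \<and> distinct p \<and> length p = Suc n \<and> hd p = rt}"

definition saw_count :: "'a set \<Rightarrow> ('a \<Rightarrow> 'a \<Rightarrow> bool) \<Rightarrow> 'a \<Rightarrow> nat \<Rightarrow> nat" where
  "saw_count V E rt n = card (saws V E rt n)"

definition saw_gf :: "'a set \<Rightarrow> ('a \<Rightarrow> 'a \<Rightarrow> bool) \<Rightarrow> 'a \<Rightarrow> complex \<Rightarrow> complex" where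
  "saw_gf V E rt z = (\<Sum>n. (if n = 0 then 0 else of_nat (saw_count V E rt n)) * z ^ n)"

definition saw_gf_summable :: "'a set \<Rightarrow> ('a \<Rightarrow> 'a \<Rightarrow> bool) \<Rightarrow> 'a \<Rightarrow> complex \<Rightarrow> bool" where
  "saw_gf_summable V E rt z = summable (\<lambda>n. (if n = 0 then 0 else of_nat (saw_count V E rt n)) * z ^ n)"

end

theory Submission
  imports Defs "HOL-Complex_Analysis.Complex_Analysis"
begin

text \<open>Near \<open>z\<^sub>*\<close> one has \<open>D = N \<cdot> (1 - \<Sum>i. M\<^sub>i/(1 + M\<^sub>i))\<close>. Quasi-transitivity makes
  the walk counts dominated by a submultiplicative sequence, so each \<open>M\<^sub>i\<close> converges beyond
  any positive point of convergence and is analytic at \<open>z\<^sub>*\<close>; there it is real and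
  nonnegative, with positive derivative because its coefficients are nonnegative and
  \<open>\<sigma>\<^sub>1 > 0\<close>. Hence the second factor vanishes at \<open>z\<^sub>*\<close> with derivative
  \<open>-\<Sum>i. M\<^sub>i'/(1 + M\<^sub>i)\<^sup>2 < 0\<close>, while \<open>N(z\<^sub>*) > 0\<close>; so \<open>z\<^sub>*\<close> is a simple zero of \<open>D\<close>
  and \<open>g(z) = N(z)(z - z\<^sub>*)/D(z)\<close> extends analytically to \<open>z\<^sub>*\<close>.\<close>

lemma is_walk_take: "is_walk V E p \<Longrightarrow> 0 < k \<Longrightarrow> is_walk V E (take k p)"
  unfolding is_walk_def using set_take_subset[of k p] by auto

lemma is_walk_drop: "is_walk V E p \<Longrightarrow> k < length p \<Longrightarrow> is_walk V E (drop k p)"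
  unfolding is_walk_def using set_drop_subset[of k p] by auto

lemma is_walk_Cons: "is_walk V E p \<Longrightarrow> E u (hd p) \<Longrightarrow> u \<in> V \<Longrightarrow> is_walk V E (u # p)"
  unfolding is_walk_def by (auto simp: hd_conv_nth nth_Cons split: nat.split)

lemma finite_saws:
  assumes "locally_finite V E"
  shows "finite (saws V E v n)"
proof (induction n)
  case 0
  have "saws V E v 0 \<subseteq> {[v]}"
    unfolding saws_def by (auto simp: length_Suc_conv)
  then show ?case using finite_subset by blast
next
  case (Suc n)
  have "saws V E v (Suc n) \<subseteq> (\<lambda>(p, y). p @ [y]) ` (SIGMA p:saws V E v n. {y. E (last p) y})"
  proof
    fix q assume "q \<in> saws V E v (Suc n)"
    then have w: "is_walk V E q" and d: "distinct q" and l: "length q = Suc (Suc n)" and "hd q = v"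
      unfolding saws_def by auto
    then have "take (Suc n) q \<in> saws V E v n"
      unfolding saws_def using is_walk_take[OF w, of "Suc n"] by (auto simp: hd_take)
    moreover have "E (last (take (Suc n) q)) (last q)"
      using w l unfolding is_walk_def by (auto simp: last_conv_nth)
    moreover have "q = take (Suc n) q @ [last q]"
      using l by (metis append_butlast_last_id butlast_conv_take diff_Suc_1 list.size(3) nat.simps(3))
    ultimately show "q \<in> (\<lambda>(p, y). p @ [y]) ` (SIGMA p:saws V E v n. {y. E (last p) y})"
      by (auto intro!: image_eqI[where x="(take (Suc n) q, last q)"])
  qed
  moreover have "finite (SIGMA p:saws V E v n. {y. E (last p) y})"
  proof (rule finite_SigmaI[OF Suc])
    fix p assume "p \<in> saws V E v n"
    then have "last p \<in> V" unfolding saws_def is_walk_def by auto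
    then show "finite {y. E (last p) y}" using assms unfolding locally_finite_def by auto
  qed
  ultimately show ?case by (meson finite_imageI finite_subset)
qed

lemma saw_count_graph_aut_le:
  assumes "locally_finite V E" and f: "graph_aut V E f"
  shows "saw_count V E v n \<le> saw_count V E (f v) n"
proof -
  have inj: "inj_on f V" and im: "f ` V = V" and edge: "\<forall>x\<in>V. \<forall>y\<in>V. E (f x) (f y) \<longleftrightarrow> E x y"
    using f unfolding graph_aut_def bij_betw_def by auto
  have "map f ` saws V E v n \<subseteq> saws V E (f v) n"
  proof
    fix q assume "q \<in> map f ` saws V E v n"
    then obtain p where q: "q = map f p" and w: "is_walk V E p" and d: "distinct p"
      and l: "length p = Suc n" and h: "hd p = v"
      unfolding saws_def by auto
    have sp: "set p \<subseteq> V" using w unfolding is_walk_def by auto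
    have "is_walk V E q"
      unfolding is_walk_def q
    proof (intro conjI allI impI)
      show "map f p \<noteq> []" using l by auto
      show "set (map f p) \<subseteq> V" using sp im by auto
      fix k assume k: "Suc k < length (map f p)"
      then have "E (p ! k) (p ! Suc k)" using w unfolding is_walk_def by auto
      moreover have "p ! k \<in> V" "p ! Suc k \<in> V" using sp k by auto
      ultimately show "E (map f p ! k) (map f p ! Suc k)" using edge k by auto
    qed
    moreover have "distinct q" unfolding q using d inj sp by (simp add: distinct_map inj_on_subset)
    moreover have "hd q = f v" using q h l by (cases p) auto
    ultimately show "q \<in> saws V E (f v) n" using l q unfolding saws_def by auto
  qed
  moreover have "inj_on (map f) (saws V E v n)"
    using inj by (intro inj_onI) (auto simp: saws_def is_walk_def inj_on_map_eq_map inj_on_subset)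
  ultimately show ?thesis
    unfolding saw_count_def by (metis card_inj_on_le finite_saws[OF assms(1)])
qed

lemma graph_aut_inv_into:
  assumes f: "graph_aut V E f"
  shows "graph_aut V E (inv_into V f)"
proof -
  have bij: "bij_betw f V V" and edge: "\<forall>x\<in>V. \<forall>y\<in>V. E (f x) (f y) \<longleftrightarrow> E x y"
    using f unfolding graph_aut_def by auto
  have bij_inv: "bij_betw (inv_into V f) V V" using bij_betw_inv_into[OF bij] .
  have "E (inv_into V f x) (inv_into V f y) \<longleftrightarrow> E x y" if "x \<in> V" "y \<in> V" for x y
    using edge[rule_format, of "inv_into V f x" "inv_into V f y"] that bij_betwE[OF bij_inv] bij
    by (simp add: bij_betw_def f_inv_into_f)
  then show ?thesis unfolding graph_aut_def using bij_inv by auto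
qed

lemma saw_count_graph_aut:
  assumes "locally_finite V E" and f: "graph_aut V E f" and v: "v \<in> V"
  shows "saw_count V E (f v) n = saw_count V E v n"
proof -
  have bij: "bij_betw f V V" using f unfolding graph_aut_def by auto
  then have "inv_into V f (f v) = v" using v by (simp add: bij_betw_def)
  then have "saw_count V E (f v) n \<le> saw_count V E v n"
    using saw_count_graph_aut_le[OF assms(1) graph_aut_inv_into[OF f], of "f v" n] by simp
  then show ?thesis using saw_count_graph_aut_le[OF assms(1) f, of v n] by simp
qed

lemma finite_saw_count_image:
  assumes "locally_finite V E" and "quasi_transitive V E"
  shows "finite ((\<lambda>v. saw_count V E v) ` V)"
proof -
  define orb where "orb x = {y. \<exists>f. graph_aut V E f \<and> f x = y}" for x
  define count_of where "count_of Ob = saw_count V E (SOME w. w \<in> V \<and> orb w = Ob)" for Ob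
  have "saw_count V E v = count_of (orb v)" if v: "v \<in> V" for v
  proof -
    obtain w where w: "w \<in> V" "orb w = orb v" and cw: "count_of (orb v) = saw_count V E w"
      unfolding count_of_def using someI[of "\<lambda>w. w \<in> V \<and> orb w = orb v" v] v by auto
    have "graph_aut V E id" unfolding graph_aut_def by auto
    then have "v \<in> orb v" unfolding orb_def by force
    then have "v \<in> orb w" using w(2) by simp
    then obtain f where "graph_aut V E f" "f w = v" unfolding orb_def by auto
    then show ?thesis using saw_count_graph_aut[OF assms(1) _ w(1)] cw by auto
  qed
  then have "(\<lambda>v. saw_count V E v) ` V \<subseteq> count_of ` orb ` V" by auto
  moreover have "finite (orb ` V)"
    using assms(2) unfolding quasi_transitive_def orb_def by simp
  ultimately show ?thesis by (meson finite_imageI finite_subset)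
qed

lemma saw_count_add_le:
  assumes "locally_finite V E" and K: "\<And>u. u \<in> V \<Longrightarrow> saw_count V E u m \<le> K"
  shows "saw_count V E v (n + m) \<le> saw_count V E v n * K"
proof -
  let ?A = "SIGMA p:saws V E v n. saws V E (last p) m"
  let ?split = "\<lambda>q. (take (Suc n) q, drop n q)"
  have sub: "?split ` saws V E v (n + m) \<subseteq> ?A"
  proof
    fix x assume "x \<in> ?split ` saws V E v (n + m)"
    then obtain q where x: "x = ?split q" and w: "is_walk V E q" and d: "distinct q"
      and l: "length q = Suc (n + m)" and "hd q = v"
      unfolding saws_def by auto
    then have "take (Suc n) q \<in> saws V E v n"
      unfolding saws_def using is_walk_take[OF w, of "Suc n"] by auto
    moreover have "last (take (Suc n) q) = q ! n" using l by (subst last_conv_nth) auto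
    moreover have "drop n q \<in> saws V E (q ! n) m"
      unfolding saws_def using is_walk_drop[OF w, of n] d l by (auto simp: hd_drop_conv_nth)
    ultimately show "x \<in> ?A" using x by auto
  qed
  have inj: "inj_on ?split (saws V E v (n + m))"
  proof (rule inj_onI)
    fix p q assume "?split p = ?split q"
    then have "take (Suc n) p = take (Suc n) q" "drop (Suc n) p = drop (Suc n) q"
      by (auto simp: drop_Suc tl_drop[symmetric])
    then show "p = q" by (metis append_take_drop_id)
  qed
  have "finite ?A" using finite_saws[OF assms(1)] by auto
  then have "saw_count V E v (n + m) \<le> card ?A"
    unfolding saw_count_def by (rule card_inj_on_le[OF inj sub])
  also have "card ?A = (\<Sum>p\<in>saws V E v n. saw_count V E (last p) m)"
    unfolding saw_count_def using finite_saws[OF assms(1)] by (simp add: card_SigmaI)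
  also have "\<dots> \<le> (\<Sum>p\<in>saws V E v n. K)"
    by (intro sum_mono K) (auto simp: saws_def is_walk_def)
  also have "\<dots> = saw_count V E v n * K" unfolding saw_count_def by simp
  finally show ?thesis .
qed

lemma Cons_in_saws:
  assumes "simple_graph V E" "E u v" "w \<in> saws V E v n" "u \<notin> set w"
  shows "u # w \<in> saws V E u (Suc n)"
  using assms is_walk_Cons[of V E w u] unfolding saws_def simple_graph_def by auto

lemma split_saw_at_neighbour:
  assumes sg: "simple_graph V E" and e: "E u v" and w: "w \<in> saws V E v n" and u: "u \<in> set w"
  shows "\<exists>k\<le>n. (u # takeWhile (\<lambda>x. x \<noteq> u) w, dropWhile (\<lambda>x. x \<noteq> u) w)
           \<in> saws V E u k \<times> saws V E u (n - k)"
proof -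
  have walk: "is_walk V E w" and d: "distinct w" and l: "length w = Suc n" and h: "hd w = v"
    using w unfolding saws_def by auto
  have uV: "u \<in> V" and uv: "u \<noteq> v" using sg e unfolding simple_graph_def by blast+
  define t where "t = takeWhile (\<lambda>x. x \<noteq> u) w"
  define s where "s = dropWhile (\<lambda>x. x \<noteq> u) w"
  have t: "t = take (length t) w" and s: "s = drop (length t) w"
    unfolding t_def s_def by (rule takeWhile_eq_take, rule dropWhile_eq_drop)
  have sne: "s \<noteq> []" unfolding s_def using u by (auto simp: dropWhile_eq_Nil_conv)
  then have hs: "hd s = u" unfolding s_def using hd_dropWhile[of "\<lambda>x. x \<noteq> u" w] by simp
  have tne: "t \<noteq> []" and ht: "hd t = v" unfolding t_def using l h uv by (cases w; auto)+
  have "t @ s = w" unfolding t_def s_def by (rule takeWhile_dropWhile_id)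
  then have lt: "length t + length s = Suc n" using l by (metis length_append)
  have "is_walk V E t" using is_walk_take[OF walk, of "length t"] tne t by simp
  then have "is_walk V E (u # t)" using is_walk_Cons e ht uV by metis
  moreover have "distinct (u # t)"
    using distinct_take[OF d, of "length t"] t set_takeWhileD[of u _ w] unfolding t_def by fastforce
  moreover have "is_walk V E s"
    using is_walk_drop[OF walk, of "length t"] s lt l sne by (cases s) auto
  moreover have "distinct s" using distinct_drop[OF d, of "length t"] s by simp
  moreover have "length t \<le> n" using lt sne by (cases s) auto
  ultimately show ?thesis
    using hs lt unfolding saws_def t_def[symmetric] s_def[symmetric] by (intro exI[of _ "length t"]) auto
qed

text \<open>A walk from \<open>v\<close> either avoids the neighbour \<open>u\<close>, and then \<open>u\<close> can be prepended, or
  splits at its visit to \<open>u\<close> into two walks from \<open>u\<close> (the first one prefixed by \<open>u\<close>).\<close>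

lemma saw_count_neighbour_le:
  assumes sg: "simple_graph V E" and lf: "locally_finite V E" and e: "E u v"
  shows "saw_count V E v n \<le> saw_count V E u (Suc n) + (\<Sum>k\<le>n. saw_count V E u k * saw_count V E u (n - k))"
proof -
  let ?W = "saws V E v n"
  let ?B = "\<Union>k\<le>n. saws V E u k \<times> saws V E u (n - k)"
  let ?split = "\<lambda>w. (u # takeWhile (\<lambda>x. x \<noteq> u) w, dropWhile (\<lambda>x. x \<noteq> u) w)"
  have fin: "finite (saws V E u k)" for k using finite_saws[OF lf] .
  have "card {w\<in>?W. u \<notin> set w} \<le> saw_count V E u (Suc n)"
    unfolding saw_count_def
    by (rule card_inj_on_le[of "(#) u"]) (use Cons_in_saws[OF sg e] fin in auto)
  moreover have "card {w\<in>?W. u \<in> set w} \<le> card ?B"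
  proof (rule card_inj_on_le[of ?split])
    show "inj_on ?split {w\<in>?W. u \<in> set w}"
    proof (rule inj_onI)
      fix w w' assume "?split w = ?split w'"
      then have "takeWhile (\<lambda>x. x \<noteq> u) w @ dropWhile (\<lambda>x. x \<noteq> u) w
          = takeWhile (\<lambda>x. x \<noteq> u) w' @ dropWhile (\<lambda>x. x \<noteq> u) w'" by simp
      then show "w = w'" by (simp only: takeWhile_dropWhile_id)
    qed
    show "?split ` {w\<in>?W. u \<in> set w} \<subseteq> ?B"
      using split_saw_at_neighbour[OF sg e] by fastforce
  qed (use fin in auto)
  moreover have "card ?B \<le> (\<Sum>k\<le>n. saw_count V E u k * saw_count V E u (n - k))"
    unfolding saw_count_def card_cartesian_product[symmetric] by (rule card_UN_le) simp
  moreover have "?W = {w\<in>?W. u \<notin> set w} \<union> {w\<in>?W. u \<in> set w}" by blast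
  then have "saw_count V E v n \<le> card {w\<in>?W. u \<notin> set w} + card {w\<in>?W. u \<in> set w}"
    unfolding saw_count_def by (metis card_Un_le)
  ultimately show ?thesis by linarith
qed

lemma summable_saw_count_neighbour:
  assumes sg: "simple_graph V E" and lf: "locally_finite V E" and e: "E u v" and x: "0 < x"
    and sum_u: "summable (\<lambda>n. real (saw_count V E u n) * x ^ n)"
  shows "summable (\<lambda>n. real (saw_count V E v n) * x ^ n)"
proof -
  define f where "f n = real (saw_count V E u n) * x ^ n" for n
  have f_nonneg: "f n \<ge> 0" for n unfolding f_def using x by simp
  have "summable f" using sum_u unfolding f_def .
  then have "summable (\<lambda>n. f (Suc n) / x)" by (intro summable_divide) (simp only: summable_Suc_iff)
  moreover have "summable (\<lambda>n. \<Sum>k\<le>n. f k * f (n - k))"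
    using sum_u f_nonneg unfolding f_def by (intro summable_Cauchy_product) auto
  ultimately show ?thesis
  proof (rule summable_comparison_test'[OF summable_add])
    fix n :: nat
    have "real (saw_count V E v n) * x ^ n
        \<le> real (saw_count V E u (Suc n) + (\<Sum>k\<le>n. saw_count V E u k * saw_count V E u (n - k))) * x ^ n"
      using x by (intro mult_right_mono of_nat_mono saw_count_neighbour_le[OF sg lf e]) auto
    also have "\<dots> = f (Suc n) / x + (\<Sum>k\<le>n. f k * f (n - k))"
    proof -
      have "real (saw_count V E u k * saw_count V E u (n - k)) * x ^ n = f k * f (n - k)"
        if "k \<le> n" for k
        using that by (simp add: f_def flip: power_add)
      then show ?thesis
        using x by (simp add: f_def sum_distrib_right distrib_right del: of_nat_mult)
    qed
    finally show "norm (real (saw_count V E v n) * x ^ n) \<le> f (Suc n) / x + (\<Sum>k\<le>n. f k * f (n - k))"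
      using x by simp
  qed
qed

lemma summable_saw_count_connected:
  assumes sg: "simple_graph V E" and lf: "locally_finite V E" and cn: "connected_graph V E"
    and "v0 \<in> V" "v \<in> V" "0 < x"
    and sum_v0: "summable (\<lambda>n. real (saw_count V E v0 n) * x ^ n)"
  shows "summable (\<lambda>n. real (saw_count V E v n) * x ^ n)"
proof -
  obtain p where p: "is_walk V E p" "hd p = v0" "last p = v"
    using cn assms(4,5) unfolding connected_graph_def by blast
  have "k < length p \<Longrightarrow> summable (\<lambda>n. real (saw_count V E (p ! k) n) * x ^ n)" for k
  proof (induction k)
    case 0
    then show ?case using p sum_v0 by (simp add: hd_conv_nth)
  next
    case (Suc k)
    then have "E (p ! k) (p ! Suc k)" using p unfolding is_walk_def by auto
    then show ?case using summable_saw_count_neighbour[OF sg lf _ \<open>0 < x\<close>] Suc by auto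
  qed
  moreover have "p \<noteq> []" using p unfolding is_walk_def by auto
  ultimately have "summable (\<lambda>n. real (saw_count V E (p ! (length p - 1)) n) * x ^ n)" by simp
  then show ?thesis using p(3) \<open>p \<noteq> []\<close> by (simp add: last_conv_nth)
qed

lemma submultiplicative_le_power:
  fixes s :: "nat \<Rightarrow> nat"
  assumes "\<And>a b. s (a + b) \<le> s a * s b"
  shows "s (k * N + j) \<le> s N ^ k * s j"
proof (induction k)
  case (Suc k)
  have "s (Suc k * N + j) \<le> s N * s (k * N + j)"
    using assms[of N "k * N + j"] by (simp add: add.assoc)
  also have "\<dots> \<le> s N * (s N ^ k * s j)" using Suc by simp
  finally show ?case by (simp add: algebra_simps)
qed simp

text \<open>Blocks of length \<open>N\<close> decay geometrically with ratio \<open>s N y^N\<close>, so the series is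
  dominated by a geometric one of ratio \<open>(max (s N y^N) (1/2))^(1/N)\<close>.\<close>

lemma summable_submultiplicative:
  fixes s :: "nat \<Rightarrow> nat"
  assumes sm: "\<And>a b. s (a + b) \<le> s a * s b" and N: "0 < N" and y: "0 \<le> y"
    and small: "real (s N) * y ^ N < 1"
  shows "summable (\<lambda>n. real (s n) * y ^ n)"
proof -
  define q where "q = max (real (s N) * y ^ N) (1/2)"
  have q: "q < 1" "q > 0" "real (s N) * y ^ N \<le> q" using small unfolding q_def by auto
  define \<rho> where "\<rho> = root N q"
  have \<rho>: "\<rho> > 0" "\<rho> < 1" "\<rho> ^ N = q" using q N unfolding \<rho>_def
    by (auto simp: real_root_pow_pos2)
  define C where "C = (\<Sum>j<N. real (s j) * y ^ j)"
  have bound: "real (s n) * y ^ n \<le> C / \<rho> ^ N * \<rho> ^ n" for n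
  proof -
    define k where "k = n div N"
    define j where "j = n mod N"
    have n: "n = k * N + j" and jN: "j < N" unfolding k_def j_def using N by simp_all
    have "real (s n) * y ^ n \<le> real (s N) ^ k * real (s j) * y ^ n"
      using submultiplicative_le_power[of s, OF sm, of k N j] n y
      by (intro mult_right_mono) (simp_all flip: of_nat_power of_nat_mult)
    also have "\<dots> = (real (s N) * y ^ N) ^ k * (real (s j) * y ^ j)"
      unfolding n by (simp add: power_add power_mult power_mult_distrib algebra_simps)
    also have "\<dots> \<le> q ^ k * C"
      unfolding C_def using q y jN
      by (intro mult_mono power_mono member_le_sum sum_nonneg) auto
    also have "\<dots> \<le> \<rho> ^ n / \<rho> ^ N * C"
    proof (rule mult_right_mono)
      have "q ^ k = \<rho> ^ n / \<rho> ^ j"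
        using \<rho> unfolding n by (simp add: power_add power_mult mult.commute flip: \<rho>(3))
      also have "\<dots> \<le> \<rho> ^ n / \<rho> ^ N"
        using \<rho> jN by (intro divide_left_mono power_decreasing) auto
      finally show "q ^ k \<le> \<rho> ^ n / \<rho> ^ N" .
    qed (use y in \<open>simp add: C_def sum_nonneg\<close>)
    finally show ?thesis by (simp add: mult.commute)
  qed
  have "summable (\<lambda>n. C / \<rho> ^ N * \<rho> ^ n)"
    using \<rho> by (intro summable_mult summable_geometric) auto
  then show ?thesis
    by (rule summable_comparison_test') (use bound y in auto)
qed

lemma summable_submultiplicative_beyond:
  fixes s :: "nat \<Rightarrow> nat"
  assumes sm: "\<And>a b. s (a + b) \<le> s a * s b" and x: "0 < x"
    and sum_x: "summable (\<lambda>n. real (s n) * x ^ n)"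
  shows "\<exists>y>x. summable (\<lambda>n. real (s n) * y ^ n)"
proof -
  have "eventually (\<lambda>n. real (s n) * x ^ n < 1) sequentially"
    using summable_LIMSEQ_zero[OF sum_x] by (rule order_tendstoD) simp
  then obtain N0 where "\<forall>n\<ge>N0. real (s n) * x ^ n < 1"
    by (auto simp: eventually_sequentially)
  then have N: "0 < Suc N0" "real (s (Suc N0)) * x ^ Suc N0 < 1" by (auto simp del: power_Suc)
  have "((\<lambda>y. real (s (Suc N0)) * y ^ Suc N0) \<longlongrightarrow> real (s (Suc N0)) * x ^ Suc N0) (at_right x)"
    by (intro tendsto_intros)
  then have "eventually (\<lambda>y. real (s (Suc N0)) * y ^ Suc N0 < 1) (at_right x)"
    using N(2) by (rule order_tendstoD)
  moreover have "eventually (\<lambda>y. x < y) (at_right x)" by (rule eventually_at_right_less)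
  ultimately have "eventually (\<lambda>y. x < y \<and> real (s (Suc N0)) * y ^ Suc N0 < 1) (at_right x)"
    by (simp add: eventually_conj_iff)
  then obtain y where "x < y" "real (s (Suc N0)) * y ^ Suc N0 < 1"
    using eventually_happens'[of "at_right x"] by auto
  then show ?thesis
    using summable_submultiplicative[OF sm N(1)] x by auto
qed

text \<open>Summing the walk counts over the finitely many automorphism classes of starting
  vertices gives a submultiplicative sequence dominating each of them.\<close>

lemma summable_saw_count_beyond:
  assumes sg: "simple_graph V E" and lf: "locally_finite V E" and cn: "connected_graph V E"
    and qt: "quasi_transitive V E" and v0: "v0 \<in> V" and x: "0 < x"
    and sum_x: "summable (\<lambda>n. real (saw_count V E v0 n) * x ^ n)"
  shows "\<exists>y>x. summable (\<lambda>n. real (saw_count V E v0 n) * y ^ n)"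
proof -
  define C where "C = (\<lambda>v. saw_count V E v) ` V"
  have finC: "finite C" unfolding C_def using finite_saw_count_image[OF lf qt] .
  define s where "s n = (\<Sum>f\<in>C. f n)" for n
  have le_s: "saw_count V E v n \<le> s n" if "v \<in> V" for v n
    unfolding s_def C_def using finC that by (intro member_le_sum[of _ _ "\<lambda>f. f n", simplified]) (auto simp: C_def)
  have "s (a + b) \<le> s a * s b" for a b
  proof -
    have "s (a + b) \<le> (\<Sum>f\<in>C. f a * s b)"
      unfolding s_def[of "a + b"] C_def using saw_count_add_le[OF lf le_s] by (intro sum_mono) auto
    then show ?thesis by (simp add: s_def sum_distrib_right)
  qed
  moreover have "summable (\<lambda>n. real (s n) * x ^ n)"
  proof -
    have "summable (\<lambda>n. \<Sum>f\<in>C. real (f n) * x ^ n)"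
      unfolding C_def using summable_saw_count_connected[OF sg lf cn v0 _ x sum_x]
      by (intro summable_sum) auto
    then show ?thesis by (simp add: s_def sum_distrib_right)
  qed
  ultimately obtain y where y: "x < y" "summable (\<lambda>n. real (s n) * y ^ n)"
    using summable_submultiplicative_beyond x by blast
  have "summable (\<lambda>n. real (saw_count V E v0 n) * y ^ n)"
    by (rule summable_comparison_test'[OF y(2)]) (use le_s[OF v0] x y(1) in \<open>auto intro!: mult_right_mono\<close>)
  then show ?thesis using y(1) by blast
qed

lemma saw_count_one_pos:
  assumes sg: "simple_graph V E" and lf: "locally_finite V E" and cn: "connected_graph V E"
    and v0: "v0 \<in> V" and card: "card V \<noteq> 1"
  shows "0 < saw_count V E v0 1"
proof -
  have "V \<noteq> {v0}" using card by auto
  then obtain y where y: "y \<in> V" "y \<noteq> v0" using v0 by blast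
  obtain p where p: "is_walk V E p" "hd p = v0" "last p = y"
    using cn v0 y unfolding connected_graph_def by blast
  have "Suc 0 < length p"
    using p y by (cases p) (auto simp: is_walk_def)
  then have e: "E v0 (p ! 1)" using p unfolding is_walk_def by (auto simp: hd_conv_nth)
  then have "[v0, p ! 1] \<in> saws V E v0 1"
    using sg v0 unfolding saws_def is_walk_def simple_graph_def by (auto simp: less_Suc_eq)
  then show ?thesis
    unfolding saw_count_def using finite_saws[OF lf] by (auto simp: card_gt_0_iff)
qed

lemma summable_saw_gf_iff:
  "saw_gf_summable V E rt (of_real x) \<longleftrightarrow> summable (\<lambda>n. real (saw_count V E rt n) * x ^ n)"
proof -
  have "saw_gf_summable V E rt (of_real x)
      \<longleftrightarrow> summable (\<lambda>n. of_real ((if n = 0 then 0 else real (saw_count V E rt n)) * x ^ n) :: complex)"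
    unfolding saw_gf_summable_def by (rule arg_cong[where f = summable]) auto
  also have "\<dots> \<longleftrightarrow> summable (\<lambda>n. real (saw_count V E rt n) * x ^ n)"
    unfolding summable_of_real_iff by (subst (1 2) summable_Suc_iff[symmetric]) simp
  finally show ?thesis .
qed

text \<open>The radius of convergence is strictly larger than \<open>x\<close>; the derivative is positive
  because the coefficients are nonnegative and the one of \<open>z\<close> counts the neighbours of the root.\<close>

lemma saw_gf_at_positive_real:
  assumes sg: "simple_graph V E" and lf: "locally_finite V E" and cn: "connected_graph V E"
    and qt: "quasi_transitive V E" and rt: "rt \<in> V" and card: "card V \<noteq> 1"
    and x: "0 < x" and sum_x: "saw_gf_summable V E rt (of_real x)"
  shows "saw_gf V E rt analytic_on {of_real x}"
    and "\<exists>m\<ge>0. saw_gf V E rt (of_real x) = of_real m"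
    and "\<exists>d>0. deriv (saw_gf V E rt) (of_real x) = of_real d"
proof -
  define c where "c n = (if n = 0 then 0 else real (saw_count V E rt n))" for n
  have coeff: "(if n = 0 then 0 else of_nat (saw_count V E rt n)) = (of_real (c n) :: complex)" for n
    by (simp add: c_def)
  have gf: "saw_gf V E rt = (\<lambda>z. \<Sum>n. of_real (c n) * z ^ n)"
    unfolding saw_gf_def coeff ..
  obtain y where "x < y" and sum_y: "saw_gf_summable V E rt (of_real y)"
    using summable_saw_count_beyond[OF sg lf cn qt rt x] sum_x unfolding summable_saw_gf_iff by blast
  then have sum_y': "summable (\<lambda>n. of_real (c n) * of_real y ^ n :: complex)"
    unfolding saw_gf_summable_def coeff by simp
  have deriv_gf: "(saw_gf V E rt has_field_derivative (\<Sum>n. diffs (\<lambda>n. of_real (c n)) n * w ^ n)) (at w)"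
    if "norm w < y" for w :: complex
    unfolding gf using termdiffs_strong[OF sum_y'] that \<open>x < y\<close> x by simp
  then have "saw_gf V E rt holomorphic_on ball 0 y"
    by (auto simp: holomorphic_on_open field_differentiable_def intro!: exI)
  then show "saw_gf V E rt analytic_on {of_real x}"
    using \<open>x < y\<close> x by (intro holomorphic_on_imp_analytic_at) auto
  have sum_c: "summable (\<lambda>n. c n * t ^ n)" if "\<bar>t\<bar> < y" for t
    using powser_inside[of "\<lambda>n. of_real (c n)" "of_real y" "of_real t :: complex"] sum_y' that \<open>x < y\<close> x
    by (simp add: summable_of_real_iff flip: of_real_power of_real_mult)
  show "\<exists>m\<ge>0. saw_gf V E rt (of_real x) = of_real m"
  proof (intro exI conjI)
    show "0 \<le> (\<Sum>n. c n * x ^ n)"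
      using sum_c[of x] \<open>x < y\<close> x by (intro suminf_nonneg) (auto simp: c_def)
    show "saw_gf V E rt (of_real x) = of_real (\<Sum>n. c n * x ^ n)"
      unfolding gf using \<open>x < y\<close> x by (simp add: suminf_of_real[OF sum_c[of x]])
  qed
  have sum_dc: "summable (\<lambda>n. diffs c n * x ^ n)"
    by (rule termdiff_converges[of x y]) (use sum_c \<open>x < y\<close> x in auto)
  show "\<exists>d>0. deriv (saw_gf V E rt) (of_real x) = of_real d"
  proof (intro exI conjI)
    show "0 < (\<Sum>n. diffs c n * x ^ n)"
    proof (rule suminf_pos2[OF sum_dc, of 0])
      show "0 < diffs c 0 * x ^ 0"
        using saw_count_one_pos[OF sg lf cn rt card] by (simp add: diffs_def c_def)
    qed (use x in \<open>auto simp: diffs_def c_def\<close>)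
    show "deriv (saw_gf V E rt) (of_real x) = of_real (\<Sum>n. diffs c n * x ^ n)"
      using DERIV_imp_deriv[OF deriv_gf, of "of_real x"] \<open>x < y\<close> x
      by (simp add: diffs_of_real suminf_of_real[OF sum_dc])
  qed
qed

lemma prod_minus_sum_eq_prod_mult:
  fixes x :: "'i \<Rightarrow> 'a::field"
  assumes "finite I" and nz: "\<And>i. i \<in> I \<Longrightarrow> 1 + x i \<noteq> 0"
  shows "(\<Prod>i\<in>I. 1 + x i) - (\<Sum>i\<in>I. x i * (\<Prod>j\<in>I-{i}. 1 + x j))
       = (\<Prod>i\<in>I. 1 + x i) * (1 - (\<Sum>i\<in>I. x i / (1 + x i)))"
proof -
  have "x i * (\<Prod>j\<in>I-{i}. 1 + x j) = (\<Prod>j\<in>I. 1 + x j) * (x i / (1 + x i))" if "i \<in> I" for i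
    using that nz[OF that] \<open>finite I\<close> by (simp add: prod.remove)
  then show ?thesis by (simp add: right_diff_distrib sum_distrib_left)
qed

lemma has_field_derivative_ratio_one_plus:
  fixes f :: "'a::real_normed_field \<Rightarrow> 'a"
  assumes "(f has_field_derivative f') (at z)" and "1 + f z \<noteq> 0"
  shows "((\<lambda>w. f w / (1 + f w)) has_field_derivative f' / (1 + f z)\<^sup>2) (at z)"
  using DERIV_divide[OF assms(1) DERIV_add[OF DERIV_const[of 1] assms(1)]] assms(2)
  by (simp add: power2_eq_square algebra_simps)

lemma sum_ratio_has_pos_real_derivative:
  fixes f :: "'i \<Rightarrow> complex \<Rightarrow> complex"
  assumes "finite I" "I \<noteq> {}"
    and analytic: "\<And>i. i \<in> I \<Longrightarrow> f i analytic_on {z}"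
    and nonneg: "\<And>i. i \<in> I \<Longrightarrow> \<exists>m\<ge>0. f i z = of_real m"
    and slope: "\<And>i. i \<in> I \<Longrightarrow> \<exists>d>0. deriv (f i) z = of_real d"
  shows "\<exists>c>0. ((\<lambda>w. \<Sum>i\<in>I. f i w / (1 + f i w)) has_field_derivative of_real c) (at z)"
proof -
  define m where "m i = Re (f i z)" for i
  define d where "d i = Re (deriv (f i) z)" for i
  have m: "f i z = of_real (m i)" "0 \<le> m i" and d: "deriv (f i) z = of_real (d i)" "0 < d i"
    if "i \<in> I" for i
    using nonneg[OF that] slope[OF that] unfolding m_def d_def by auto
  have nz: "1 + f i z \<noteq> 0" if "i \<in> I" for i
    using m[OF that] by (auto simp: complex_eq_iff)
  have "((\<lambda>w. \<Sum>i\<in>I. f i w / (1 + f i w)) has_field_derivative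
          (\<Sum>i\<in>I. deriv (f i) z / (1 + f i z)\<^sup>2)) (at z)"
    using nz by (intro DERIV_sum has_field_derivative_ratio_one_plus analytic_derivI analytic)
  also have "(\<Sum>i\<in>I. deriv (f i) z / (1 + f i z)\<^sup>2) = of_real (\<Sum>i\<in>I. d i / (1 + m i)\<^sup>2)"
    using m d by simp
  moreover have "0 < d i / (1 + m i)\<^sup>2" if "i \<in> I" for i
    using m(2)[OF that] d(2)[OF that] by (intro divide_pos_pos) auto
  ultimately show ?thesis
    using assms(1,2) by (intro exI[of _ "\<Sum>i\<in>I. d i / (1 + m i)\<^sup>2"] conjI sum_pos) auto
qed

text \<open>Near \<open>z\<close>, \<open>Q = P \<cdot> (1 - \<Sum>i. f i/(1 + f i))\<close>, and the second factor has derivative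
  \<open>-\<Sum>i. deriv (f i)/(1 + f i)\<^sup>2 < 0\<close> at \<open>z\<close>.\<close>

lemma prod_minus_sum_simple_zero:
  fixes f :: "'i \<Rightarrow> complex \<Rightarrow> complex" and I :: "'i set"
  defines "P \<equiv> \<lambda>w. \<Prod>i\<in>I. 1 + f i w"
  defines "Q \<equiv> \<lambda>w. P w - (\<Sum>i\<in>I. f i w * (\<Prod>j\<in>I-{i}. 1 + f j w))"
  assumes I: "finite I" "I \<noteq> {}"
    and analytic: "\<And>i. i \<in> I \<Longrightarrow> f i analytic_on {z}"
    and nonneg: "\<And>i. i \<in> I \<Longrightarrow> \<exists>m\<ge>0. f i z = of_real m"
    and slope: "\<And>i. i \<in> I \<Longrightarrow> \<exists>d>0. deriv (f i) z = of_real d"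
    and root: "(\<Sum>i\<in>I. f i z / (1 + f i z)) = 1"
  shows "P analytic_on {z}" "P z \<noteq> 0" "Q analytic_on {z}" "Q z = 0" "deriv Q z \<noteq> 0"
proof -
  define H where "H w = 1 - (\<Sum>i\<in>I. f i w / (1 + f i w))" for w
  have nz: "1 + f i z \<noteq> 0" if "i \<in> I" for i
    using nonneg[OF that] by (force simp: complex_eq_iff)
  show P: "P analytic_on {z}" unfolding P_def by (intro analytic_intros analytic)
  show Pz: "P z \<noteq> 0" unfolding P_def using I nz by (simp add: prod_zero_iff)
  show "Q analytic_on {z}" unfolding Q_def P_def by (intro analytic_intros analytic) auto
  have "eventually (\<lambda>w. \<forall>i\<in>I. 1 + f i w \<noteq> 0) (nhds z)"
    using I nz analytic
    by (intro eventually_ball_finite ballI)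
      (auto simp: eventually_nhds_conv_at intro!: analytic_at_neq_imp_eventually_neq analytic_intros)
  then have QPH: "eventually (\<lambda>w. Q w = P w * H w) (nhds z)"
    unfolding Q_def P_def H_def
    by eventually_elim (rule prod_minus_sum_eq_prod_mult[OF I(1)], blast)
  have Hz: "H z = 0" unfolding H_def using root by simp
  then show "Q z = 0" using QPH by (simp add: eventually_nhds_conv_at)
  have "\<exists>c>0. ((\<lambda>w. \<Sum>i\<in>I. f i w / (1 + f i w)) has_field_derivative of_real c) (at z)"
    by (rule sum_ratio_has_pos_real_derivative) (use I analytic nonneg slope in auto)
  then obtain c where "c > 0"
    and dH': "((\<lambda>w. \<Sum>i\<in>I. f i w / (1 + f i w)) has_field_derivative of_real c) (at z)"
    by blast
  then have dH: "(H has_field_derivative - of_real c) (at z)"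
    unfolding H_def[abs_def] using DERIV_diff[OF DERIV_const dH'] by simp
  have "((\<lambda>w. P w * H w) has_field_derivative P z * (- of_real c)) (at z)"
    using DERIV_mult[OF analytic_derivI[OF P] dH] Hz by (simp add: mult.commute)
  then have "deriv (\<lambda>w. P w * H w) z = P z * (- of_real c)" by (rule DERIV_imp_deriv)
  then have "deriv Q z = P z * (- of_real c)" using deriv_cong_ev[OF QPH refl] by simp
  then show "deriv Q z \<noteq> 0" using Pz \<open>c > 0\<close> by simp
qed

lemma simple_zero_quotient:
  fixes D N :: "complex \<Rightarrow> complex"
  assumes "open S" "z \<in> S" "D holomorphic_on S" "N holomorphic_on S"
    and "D z = 0" "deriv D z \<noteq> 0" "N z \<noteq> 0"
  shows "\<exists>T g. open T \<and> z \<in> T \<and> T \<subseteq> S \<and> g holomorphic_on T \<and> g z \<noteq> 0 \<and>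
           (\<forall>w\<in>T - {z}. N w / D w = g w / (w - z))"
proof -
  define q where "q w = (if w = z then deriv D z else (D w - D z) / (w - z))" for w
  have q: "q holomorphic_on S" unfolding q_def[abs_def] by (rule pole_lemma_open[OF assms(3,1)])
  then have "isCont q z" using assms(1,2) holomorphic_on_imp_continuous_on continuous_on_eq_continuous_at by blast
  then obtain e where "e > 0" and e: "\<And>w. dist z w < e \<Longrightarrow> q w \<noteq> 0"
    using continuous_at_avoid[of z q 0] assms(6) unfolding q_def by auto
  obtain e' where "e' > 0" "ball z e' \<subseteq> S" using assms(1,2) openE by blast
  define T where "T = ball z (min e e')"
  have T: "open T" "z \<in> T" "T \<subseteq> S" and qT: "\<And>w. w \<in> T \<Longrightarrow> q w \<noteq> 0"
    unfolding T_def using \<open>e > 0\<close> \<open>e' > 0\<close> \<open>ball z e' \<subseteq> S\<close> e by auto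
  show ?thesis
  proof (intro exI conjI ballI)
    show "(\<lambda>w. N w / q w) holomorphic_on T"
      using holomorphic_on_subset[OF assms(4) T(3)] holomorphic_on_subset[OF q T(3)] qT
      by (intro holomorphic_on_divide)
    show "N z / q z \<noteq> 0" using assms(6,7) by (simp add: q_def)
    fix w assume "w \<in> T - {z}"
    then show "N w / D w = N w / q w / (w - z)" using assms(5) by (simp add: q_def)
  qed (use T in auto)
qed

theorem lemma2:
  fixes r :: nat
    and V :: "nat \<Rightarrow> 'a set" and E :: "nat \<Rightarrow> 'a \<Rightarrow> 'a \<Rightarrow> bool" and rt :: "nat \<Rightarrow> 'a"
    and zs :: real
  defines "M \<equiv> (\<lambda>i z. saw_gf (V i) (E i) (rt i) z)"
  defines "N \<equiv> (\<lambda>z. \<Prod>i=1..r. 1 + M i z)"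
  defines "D \<equiv> (\<lambda>z. (\<Prod>k=1..r. 1 + M k z)
                    - (\<Sum>i=1..r. M i z * (\<Prod>j\<in>{1..r}-{i}. 1 + M j z)))"
  assumes r2: "r \<ge> 2"
    and graphs: "\<And>i. i \<in> {1..r} \<Longrightarrow>
        simple_graph (V i) (E i) \<and> connected_graph (V i) (E i) \<and>
        locally_finite (V i) (E i) \<and> quasi_transitive (V i) (E i) \<and>
        rt i \<in> V i \<and> card (V i) \<noteq> 1 \<and> V i \<noteq> {}"
    and zs_pos: "zs > 0"
    and zs_conv: "\<And>i. i \<in> {1..r} \<Longrightarrow> saw_gf_summable (V i) (E i) (rt i) (complex_of_real zs)"
    and zs_eq: "(\<Sum>i=1..r. M i (complex_of_real zs) / (1 + M i (complex_of_real zs))) = 1"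
    and zs_least: "\<And>x. 0 < x \<Longrightarrow> x < zs \<Longrightarrow>
        (\<Sum>i=1..r. M i (complex_of_real x) / (1 + M i (complex_of_real x))) \<noteq> 1"
  shows "\<exists>S. open S \<and> complex_of_real zs \<in> S \<and> D holomorphic_on S \<and>
           D (complex_of_real zs) = 0 \<and> deriv D (complex_of_real zs) \<noteq> 0 \<and>
           (\<exists>g. g holomorphic_on S \<and> g (complex_of_real zs) \<noteq> 0 \<and>
              (\<forall>z\<in>S - {complex_of_real zs}. N z / D z = g z / (z - complex_of_real zs)))"
proof -
  let ?z = "complex_of_real zs"
  have "M i analytic_on {?z}" "\<exists>m\<ge>0. M i ?z = of_real m" "\<exists>d>0. deriv (M i) ?z = of_real d"
    if "i \<in> {1..r}" for i
    using saw_gf_at_positive_real[OF _ _ _ _ _ _ zs_pos zs_conv[OF that]] graphs[OF that]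
    unfolding M_def by auto
  moreover have "finite {1..r}" "{1..r} \<noteq> {}" using r2 by auto
  ultimately have N: "N analytic_on {?z}" "N ?z \<noteq> 0"
    and D: "D analytic_on {?z}" "D ?z = 0" "deriv D ?z \<noteq> 0"
    using prod_minus_sum_simple_zero[of "{1..r}" M ?z] zs_eq unfolding N_def D_def by auto
  obtain S where S: "open S" "?z \<in> S" "N holomorphic_on S" "D holomorphic_on S"
    using N(1) D(1) unfolding analytic_at by (metis Int_iff holomorphic_on_subset inf_le1 inf_le2 open_Int)
  then obtain T g where "open T" "?z \<in> T" "T \<subseteq> S" "g holomorphic_on T" "g ?z \<noteq> 0"
    and "\<forall>w\<in>T - {?z}. N w / D w = g w / (w - ?z)"
    using simple_zero_quotient[of S ?z D N] N(2) D(2,3) by blast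
  then show ?thesis using holomorphic_on_subset[OF S(4)] D(2,3) by blast
qed

end
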